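(* Let $P$ be a Poisson bracket on $\mathbb{R}^n$, let $\ast_\nu=\sum_r\nu^rC_r$ be a star-product on $(\mathbb{R}^n,P)$, and let $\rho_1$ be the first cochain of its associated sun-product. Then $\rho_1$ is (the restriction to $\mathsf{Pol}$ of) a differential operator vanishing on constants, and its Hochschild coboundary satisfies $\delta\rho_1=P-C_1$.
   Context: $\mathsf{N}=C^\infty(\mathbb{R}^n)$, coordinates $x_1,\dots,x_n$, $\mathsf{Pol}=\mathbb{R}[x_1,\dots,x_n]$. A (differential) star-product on $(\mathbb{R}^n,P)$ is a bilinear map $f\ast_\nu g=\sum_{r\ge0}\nu^rC_r(f,g)$ from $\mathsf{N}\times\mathsf{N}$ to $\mathsf{N}[[\nu]]$, extended $\mathbb{R}[[\nu]]$-bilinearly, where the $C_r$ are bidifferential operators with: $C_0(f,g)=fg$; $C_r(c,f)=C_r(f,c)=0$ for $r\ge1$ and constants $c$; associativity $\sum_{s+t=r}C_s(C_t(f,g),h)=\sum_{s+t=r}C_s(f,C_t(g,h))$ for all $r\ge0$; and $C_1(f,g)-C_1(g,f)=2P(f,g)$. The sun-product cochains $\rho_r:\mathsf{Pol}\to\mathsf{N}$ are the linear maps determined by $\rho(1)=1$ and $\rho(x_{i_1}\cdots x_{i_k})=\frac1{k!}\sum_{\sigma\in S_k}x_{i_{\sigma(1)}}\ast_\nu\cdots\ast_\nu x_{i_{\sigma(k)}}=\sum_{r\ge0}\nu^r\rho_r(x_{i_1}\cdots x_{i_k})$. The Hochschild coboundary of a linear map $\psi$ is $\delta\psi(f,g)=f\psi(g)-\psi(fg)+\psi(f)g$;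 $P$ is regarded as the bilinear map $(f,g)\mapsto P(f,g)$. *)

theory Defs
  imports "HOL-Analysis.Analysis" "HOL-Library.Poly_Mapping"
          "HOL-Combinatorics.Multiset_Permutations"
begin

type_synonym 'n fn = "real ^ 'n \<Rightarrow> real"

definition pd :: "'n::finite \<Rightarrow> 'n fn \<Rightarrow> 'n fn" where
  "pd i f = (\<lambda>x. frechet_derivative f (at x) (axis i 1))"

fun pdl :: "'n::finite list \<Rightarrow> 'n fn \<Rightarrow> 'n fn" where
  "pdl [] f = f"
| "pdl (i # is) f = pd i (pdl is f)"

definition smooth :: "'n::finite fn \<Rightarrow> bool" where
  "smooth f \<longleftrightarrow> (\<forall>is x. pdl is f differentiable (at x))"

definition diff_op :: "('n::finite fn \<Rightarrow> 'n fn) \<Rightarrow> bool" where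
  "diff_op D \<longleftrightarrow> (\<exists>S a. finite S \<and> (\<forall>is\<in>S. smooth (a is)) \<and>
     (\<forall>f. smooth f \<longrightarrow> D f = (\<lambda>x. \<Sum>is\<in>S. a is x * pdl is f x)))"

definition bidiff_op :: "('n::finite fn \<Rightarrow> 'n fn \<Rightarrow> 'n fn) \<Rightarrow> bool" where
  "bidiff_op B \<longleftrightarrow> (\<exists>S a. finite S \<and> (\<forall>p\<in>S. smooth (a p)) \<and>
     (\<forall>f g. smooth f \<longrightarrow> smooth g \<longrightarrow>
        B f g = (\<lambda>x. \<Sum>(is, js)\<in>S. a (is, js) x * pdl is f x * pdl js g x)))"

definition poisson_bracket :: "('n::finite fn \<Rightarrow> 'n fn \<Rightarrow> 'n fn) \<Rightarrow> bool" where
  "poisson_bracket P \<longleftrightarrow>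
     (\<forall>f g. smooth f \<longrightarrow> smooth g \<longrightarrow> smooth (P f g)) \<and>
     (\<forall>f g h a b. smooth f \<longrightarrow> smooth g \<longrightarrow> smooth h \<longrightarrow>
        P (\<lambda>x. a * f x + b * g x) h = (\<lambda>x. a * P f h x + b * P g h x)) \<and>
     (\<forall>f g. smooth f \<longrightarrow> smooth g \<longrightarrow> P f g = (\<lambda>x. - P g f x)) \<and>
     (\<forall>f g h. smooth f \<longrightarrow> smooth g \<longrightarrow> smooth h \<longrightarrow>
        P f (\<lambda>x. g x * h x) = (\<lambda>x. P f g x * h x + g x * P f h x)) \<and>
     (\<forall>f g h. smooth f \<longrightarrow> smooth g \<longrightarrow> smooth h \<longrightarrow>
        (\<lambda>x. P f (P g h) x + P g (P h f) x + P h (P f g) x) = (\<lambda>x. 0))"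

text \<open>Differential star-product f *_nu g = sum_r nu^r C r f g on (R^n, P).\<close>
definition star_product :: "('n::finite fn \<Rightarrow> 'n fn \<Rightarrow> 'n fn) \<Rightarrow>
    (nat \<Rightarrow> 'n fn \<Rightarrow> 'n fn \<Rightarrow> 'n fn) \<Rightarrow> bool" where
  "star_product P C \<longleftrightarrow>
     (\<forall>r. bidiff_op (C r)) \<and>
     (\<forall>f g. smooth f \<longrightarrow> smooth g \<longrightarrow> C 0 f g = (\<lambda>x. f x * g x)) \<and>
     (\<forall>r c f. r \<ge> 1 \<longrightarrow> smooth f \<longrightarrow>
        C r (\<lambda>_. c) f = (\<lambda>_. 0) \<and> C r f (\<lambda>_. c) = (\<lambda>_. 0)) \<and>
     (\<forall>r f g h. smooth f \<longrightarrow> smooth g \<longrightarrow> smooth h \<longrightarrow>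
        (\<lambda>x. \<Sum>s\<le>r. C s (C (r - s) f g) h x) = (\<lambda>x. \<Sum>s\<le>r. C s f (C (r - s) g h) x)) \<and>
     (\<forall>f g. smooth f \<longrightarrow> smooth g \<longrightarrow>
        (\<lambda>x. C 1 f g x - C 1 g f x) = (\<lambda>x. 2 * P f g x))"

text \<open>nu^r-coefficient of the (right-nested) star product f1 * (f2 * ( ... * 1)).\<close>
fun starw :: "(nat \<Rightarrow> 'n fn \<Rightarrow> 'n fn \<Rightarrow> 'n fn) \<Rightarrow> 'n fn list \<Rightarrow> nat \<Rightarrow> 'n fn" where
  "starw C [] r = (if r = 0 then (\<lambda>_. 1) else (\<lambda>_. 0))"
| "starw C (f # fs) r = (\<lambda>x. \<Sum>s\<le>r. C s f (starw C fs (r - s)) x)"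

definition coord :: "'n::finite \<Rightarrow> 'n fn" where
  "coord i = (\<lambda>x. x $ i)"

text \<open>Pol = R[x_1..x_n]: monomials are multisets of indices, polynomials are
  finitely supported coefficient maps (multiplication = convolution).\<close>
type_synonym 'n pol = "'n multiset \<Rightarrow>\<^sub>0 real"

definition poly_eval :: "'n::finite pol \<Rightarrow> 'n fn" where
  "poly_eval p = (\<lambda>x. \<Sum>M\<in>Poly_Mapping.keys p. Poly_Mapping.lookup p M * (\<Prod>i\<in>#M. x $ i))"

text \<open>rho_r on a monomial: symmetrisation over orderings of its letters
  (averaging over S_k equals averaging over the distinct words with that multiset).\<close>
definition rho_mon :: "(nat \<Rightarrow> 'n::finite fn \<Rightarrow> 'n fn \<Rightarrow> 'n fn) \<Rightarrow> nat \<Rightarrow> 'n multiset \<Rightarrow> 'n fn" where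
  "rho_mon C r M = (\<lambda>x. (\<Sum>w\<in>permutations_of_multiset M. starw C (map coord w) r x)
                          / real (card (permutations_of_multiset M)))"

definition rho :: "(nat \<Rightarrow> 'n::finite fn \<Rightarrow> 'n fn \<Rightarrow> 'n fn) \<Rightarrow> nat \<Rightarrow> 'n pol \<Rightarrow> 'n fn" where
  "rho C r p = (\<lambda>x. \<Sum>M\<in>Poly_Mapping.keys p. Poly_Mapping.lookup p M * rho_mon C r M x)"

end

(*
  Split C_1 = S + P into its symmetric part S and the Poisson bracket.  The nu^1-coefficient
  of x_(i_1) * (x_(i_2) * ( ... * 1)) is the chain sum over j of
  x_(i_1) ... x_(i_(j-1)) C_1(x_(i_j), x_(i_(j+1)) ... x_(i_k)).  Reversing the word negates
  its P-part, so after symmetrisation rho_1(x^M) is the S-chain of any word with letters M.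
  Since S is a symmetric Hochschild 2-cocycle vanishing on constants, this chain satisfies
  rho_1(x^M x^N) = rho_1(x^M) x^N + x^M rho_1(x^N) + S(x^M, x^N), i.e. delta rho_1 = -S = P - C_1.

  Moreover rho_1(x_b x^M) = x_b rho_1(x^M) + S(x_b, x^M), and S(x_b, -) only sees derivatives
  of order < m at a point.  Hence the value at x of rho_1((y - x)^A y^M) vanishes once
  |A| > m, and Taylor-expanding monomials around x shows that on polynomials rho_1 agrees with
  the differential operator f |-> sum over |alpha| <= m + 1 of
  rho_1((y - x)^alpha)(x) / alpha! * d^alpha f(x).
*)

theory Submission
  imports Defs
begin

(* Keeps the simplifier from rewriting C 1 to C (Suc 0). *)
declare One_nat_def [simp del]

section \<open>Smooth functions and iterated partial derivatives\<close>

lemma pdl_append: "pdl (is @ js) f = pdl is (pdl js f)"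
  by (induction "is") auto

lemma smooth_differentiable: "smooth f \<Longrightarrow> f differentiable (at x)"
  unfolding smooth_def by (metis pdl.simps(1))

lemma smooth_pdl: "smooth f \<Longrightarrow> smooth (pdl is f)"
  unfolding smooth_def by (metis pdl_append)

lemma smooth_pd: "smooth f \<Longrightarrow> smooth (pd i f)"
  using smooth_pdl[of f "[i]"] by simp

lemma smoothI:
  assumes "\<And>x. f differentiable (at x)" and "\<And>i. smooth (pd i f)"
  shows "smooth f"
  unfolding smooth_def
proof (intro allI)
  fix "is" x
  show "pdl is f differentiable (at x)"
  proof (cases "is" rule: rev_exhaust)
    case (snoc js i)
    then show ?thesis
      using assms(2)[of i] pdl_append[of js "[i]"] by (simp add: smooth_def)
  qed (use assms(1) in simp)
qed

lemma pd_has_derivative: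
  assumes "\<And>x. (f has_derivative f' x) (at x)"
  shows "pd i f = (\<lambda>x. f' x (axis i 1))"
  unfolding pd_def using frechet_derivative_at[OF assms] by metis

lemma pd_add:
  assumes "\<And>x. f differentiable (at x)" and "\<And>x. g differentiable (at x)"
  shows "pd i (\<lambda>x. f x + g x) = (\<lambda>x. pd i f x + pd i g x)"
  using assms unfolding frechet_derivative_works
  by (subst pd_has_derivative[OF has_derivative_add]) (auto simp: pd_def)

lemma pd_mult:
  assumes "\<And>x. f differentiable (at x)" and "\<And>x. g differentiable (at x)"
  shows "pd i (\<lambda>x. f x * g x) = (\<lambda>x. pd i f x * g x + f x * pd i g x)"
  using assms unfolding frechet_derivative_works
  by (subst pd_has_derivative[OF has_derivative_mult]) (auto simp: pd_def algebra_simps)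

lemma pd_const: "pd i (\<lambda>x. c) = (\<lambda>x. 0)"
  using pd_has_derivative[of "\<lambda>x. c" "\<lambda>x h. 0"] by simp

lemma pd_affine: "pd i (\<lambda>y. y $ b - c) = (\<lambda>y. if i = b then 1 else 0)"
proof -
  have "pd i (\<lambda>y. y $ b - c) = (\<lambda>y. axis i 1 $ b - 0)"
    by (rule pd_has_derivative, intro has_derivative_diff has_derivative_const
        bounded_linear_imp_has_derivative bounded_linear_vec_nth)
  then show ?thesis by (simp add: axis_def)
qed

lemma pdl_const: "pdl is (\<lambda>x. c) = (if is = [] then (\<lambda>x. c) else (\<lambda>x. 0))"
  by (induction "is") (auto simp: pd_const)

lemma smooth_const: "smooth (\<lambda>x. c)"
  unfolding smooth_def pdl_const by simp

lemma smooth_affine: "smooth (\<lambda>y. y $ b - c)"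
proof (rule smoothI)
  show "(\<lambda>y. y $ b - c) differentiable (at x)" for x
    by (intro differentiable_diff bounded_linear_imp_differentiable[OF bounded_linear_vec_nth])
      simp
qed (simp add: pd_affine smooth_const)

lemma smooth_coord: "smooth (\<lambda>y. y $ b)"
  using smooth_affine[of b 0] by simp

lemma pdl_add_of_differentiable:
  assumes "\<And>js x. length js < length is \<Longrightarrow>
      pdl js f differentiable (at x) \<and> pdl js g differentiable (at x)"
  shows "pdl is (\<lambda>x. f x + g x) = (\<lambda>x. pdl is f x + pdl is g x)"
  using assms
proof (induction "is")
  case (Cons i "is")
  then have "pdl is (\<lambda>x. f x + g x) = (\<lambda>x. pdl is f x + pdl is g x)"
    by force
  then show ?case
    using Cons.prems[of "is"] by (simp add: pd_add)
qed simp

lemma pdl_add: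
  "smooth f \<Longrightarrow> smooth g \<Longrightarrow> pdl is (\<lambda>x. f x + g x) = (\<lambda>x. pdl is f x + pdl is g x)"
  by (rule pdl_add_of_differentiable) (auto simp: smooth_def)

lemma smooth_add: "smooth f \<Longrightarrow> smooth g \<Longrightarrow> smooth (\<lambda>x. f x + g x)"
  unfolding smooth_def by (simp add: pdl_add[unfolded smooth_def] differentiable_add)

lemma pdl_mult_differentiable:
  fixes f g :: "'n::finite fn"
  assumes "smooth f" and "smooth g"
  shows "pdl is (\<lambda>x. f x * g x) differentiable (at x)"
  using assms
proof (induction "length is" arbitrary: "is" f g x rule: less_induct)
  case less
  show ?case
  proof (cases "is" rule: rev_exhaust)
    case Nil
    then show ?thesis
      using less.prems by (simp add: differentiable_mult smooth_differentiable)
  next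
    case (snoc js i)
    have IH: "pdl ks (\<lambda>x. u x * v x) differentiable (at y)"
      if "length ks \<le> length js" "smooth u" "smooth v" for ks :: "'n list" and u v y
      using less.hyps that snoc by simp
    have derivs: "smooth (pd i f)" "smooth (pd i g)"
      using less.prems by (simp_all add: smooth_pd)
    have "pdl is (\<lambda>x. f x * g x) = pdl js (\<lambda>x. pd i f x * g x + f x * pd i g x)"
      using less.prems pdl_append[of js "[i]"] by (simp add: snoc pd_mult smooth_differentiable)
    also have "\<dots> = (\<lambda>x. pdl js (\<lambda>x. pd i f x * g x) x + pdl js (\<lambda>x. f x * pd i g x) x)"
      by (rule pdl_add_of_differentiable) (use IH derivs less.prems in auto)
    finally show ?thesis
      using IH derivs less.prems by (auto intro!: differentiable_add)
  qed
qed

lemma smooth_mult: "smooth f \<Longrightarrow> smooth g \<Longrightarrow> smooth (\<lambda>x. f x * g x)"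
  unfolding smooth_def using pdl_mult_differentiable[unfolded smooth_def] by blast

lemma smooth_cmult: "smooth f \<Longrightarrow> smooth (\<lambda>x. c * f x)"
  using smooth_mult[OF smooth_const] by blast

lemma smooth_minus: "smooth f \<Longrightarrow> smooth g \<Longrightarrow> smooth (\<lambda>x. f x - g x)"
  using smooth_add[of f "\<lambda>x. (-1) * g x"] smooth_cmult[of g "-1"] by simp

lemma smooth_sum:
  "finite K \<Longrightarrow> (\<And>k. k \<in> K \<Longrightarrow> smooth (F k)) \<Longrightarrow> smooth (\<lambda>x. \<Sum>k\<in>K. F k x)"
  by (induction K rule: finite_induct) (auto simp: smooth_const intro!: smooth_add)

lemma pdl_cmult: "smooth f \<Longrightarrow> pdl is (\<lambda>x. c * f x) = (\<lambda>x. c * pdl is f x)"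
proof (induction "is")
  case (Cons i "is")
  then show ?case
    by (simp add: pd_mult smooth_differentiable smooth_pdl pd_const
        differentiable_const[unfolded differentiable_def])
qed simp

lemma pdl_sum:
  "finite K \<Longrightarrow> (\<And>k. k \<in> K \<Longrightarrow> smooth (F k)) \<Longrightarrow>
   pdl is (\<lambda>x. \<Sum>k\<in>K. F k x) = (\<lambda>x. \<Sum>k\<in>K. pdl is (F k) x)"
  by (induction K rule: finite_induct) (simp_all add: pdl_const pdl_add smooth_sum)

definition del_at :: "nat \<Rightarrow> 'a list \<Rightarrow> 'a list" where
  "del_at k xs = take k xs @ drop (Suc k) xs"

definition ins_at :: "nat \<Rightarrow> 'a \<Rightarrow> 'a list \<Rightarrow> 'a list" where
  "ins_at k b xs = take k xs @ b # drop k xs"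

lemma del_at_Cons_0 [simp]: "del_at 0 (i # xs) = xs"
  and del_at_Cons_Suc [simp]: "del_at (Suc k) (i # xs) = i # del_at k xs"
  by (simp_all add: del_at_def)

lemma length_del_at: "k < length xs \<Longrightarrow> length (del_at k xs) = length xs - 1"
  by (simp add: del_at_def)

lemma length_ins_at: "k \<le> length xs \<Longrightarrow> length (ins_at k b xs) = Suc (length xs)"
  by (simp add: ins_at_def)

lemma nth_ins_at: "k \<le> length xs \<Longrightarrow> ins_at k b xs ! k = b"
  by (simp add: ins_at_def nth_append)

lemma mset_ins_at: "mset (ins_at k b xs) = add_mset b (mset xs)"
  by (metis append_take_drop_id ins_at_def mset_append union_mset_add_mset_right mset.simps(2))

lemma del_at_ins_at: "k \<le> length xs \<Longrightarrow> del_at k (ins_at k b xs) = xs"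
  by (simp add: ins_at_def del_at_def)

lemma ins_at_del_at: "k < length xs \<Longrightarrow> ins_at k (xs ! k) (del_at k xs) = xs"
  by (simp add: ins_at_def del_at_def id_take_nth_drop[symmetric])

lemma pdl_affine_mult:
  assumes "smooth h"
  shows "pdl is (\<lambda>y. (y $ b - c) * h y) = (\<lambda>y. (y $ b - c) * pdl is h y +
    (\<Sum>k<length is. if is ! k = b then pdl (del_at k is) h y else 0))"
proof (induction "is")
  case (Cons i "is")
  define F where "F k = (\<lambda>y. if is ! k = b then pdl (del_at k is) h y else 0)" for k
  have smooth_F: "smooth (F k)" for k
    using assms by (cases "is ! k = b") (simp_all add: F_def smooth_pdl smooth_const)
  have pd_F: "pd i (F k) =
      (\<lambda>y. if (i # is) ! Suc k = b then pdl (del_at (Suc k) (i # is)) h y else 0)" for k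
    by (cases "is ! k = b") (simp_all add: F_def pd_const)
  have "pdl (i # is) (\<lambda>y. (y $ b - c) * h y) =
      pd i (\<lambda>y. (y $ b - c) * pdl is h y + (\<Sum>k<length is. F k y))"
    using Cons by (simp add: F_def)
  also have "\<dots> = (\<lambda>y. (if i = b then pdl is h y else 0) + (y $ b - c) * pdl (i # is) h y
      + (\<Sum>k<length is. pd i (F k) y))"
    using assms smooth_F pdl_sum[of "{..<length is}" F "[i]"]
    by (simp add: pd_add pd_mult pd_affine smooth_differentiable smooth_mult smooth_affine
        smooth_pdl smooth_sum)
  finally show ?case
    unfolding length_Cons sum.lessThan_Suc_shift pd_F del_at_Cons_0
    by (simp add: algebra_simps del: del_at_Cons_Suc)
qed simp

definition vanishes_to_order :: "nat \<Rightarrow> 'n::finite fn \<Rightarrow> real ^ 'n \<Rightarrow> bool" where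
  "vanishes_to_order m f x \<longleftrightarrow> (\<forall>js. length js < m \<longrightarrow> pdl js f x = 0)"


lemma bidiff_opE:
  assumes "bidiff_op B"
  obtains T a where "finite T" and "\<And>p. p \<in> T \<Longrightarrow> smooth (a p)"
    and "\<And>f g. smooth f \<Longrightarrow> smooth g \<Longrightarrow>
      B f g = (\<lambda>x. \<Sum>p\<in>T. a p x * pdl (fst p) f x * pdl (snd p) g x)"
proof -
  obtain T a where "finite T" "\<forall>p\<in>T. smooth (a p)"
    "\<forall>f g. smooth f \<longrightarrow> smooth g \<longrightarrow>
      B f g = (\<lambda>x. \<Sum>(is, js)\<in>T. a (is, js) x * pdl is f x * pdl js g x)"
    using assms unfolding bidiff_op_def by blast
  then show thesis
    using that[of T a] by (simp add: split_def)
qed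

lemma bidiff_op_smooth:
  assumes "bidiff_op B" and "smooth f" and "smooth g"
  shows "smooth (B f g)"
proof -
  obtain T a where "finite T" "\<And>p. p \<in> T \<Longrightarrow> smooth (a p)"
    and B: "\<And>f g. smooth f \<Longrightarrow> smooth g \<Longrightarrow>
      B f g = (\<lambda>x. \<Sum>p\<in>T. a p x * pdl (fst p) f x * pdl (snd p) g x)"
    using bidiff_opE[OF assms(1)] by blast
  then show ?thesis
    using assms(2,3) by (auto intro!: smooth_sum smooth_mult smooth_pdl)
qed

lemma bidiff_op_linear:
  assumes "bidiff_op B" and "smooth f" and "smooth g" and "smooth h"
  shows "B (\<lambda>x. a * f x + b * g x) h = (\<lambda>x. a * B f h x + b * B g h x)"
    and "B h (\<lambda>x. a * f x + b * g x) = (\<lambda>x. a * B h f x + b * B h g x)"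
proof -
  obtain T c where "finite T" "\<And>p. p \<in> T \<Longrightarrow> smooth (c p)"
    and "\<And>f g. smooth f \<Longrightarrow> smooth g \<Longrightarrow>
      B f g = (\<lambda>x. \<Sum>p\<in>T. c p x * pdl (fst p) f x * pdl (snd p) g x)"
    using bidiff_opE[OF assms(1)] by blast
  moreover have "pdl js (\<lambda>x. a * f x + b * g x) = (\<lambda>x. a * pdl js f x + b * pdl js g x)" for js
    using assms by (simp add: pdl_add pdl_cmult smooth_cmult)
  ultimately show "B (\<lambda>x. a * f x + b * g x) h = (\<lambda>x. a * B f h x + b * B g h x)"
    and "B h (\<lambda>x. a * f x + b * g x) = (\<lambda>x. a * B h f x + b * B h g x)"
    using assms by (simp_all add: smooth_add smooth_cmult sum.distrib sum_distrib_left algebra_simps)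
qed

lemma bidiff_op_local:
  assumes "bidiff_op B"
  obtains m where
    "\<And>f g x. smooth f \<Longrightarrow> smooth g \<Longrightarrow> vanishes_to_order m f x \<Longrightarrow> B f g x = 0"
    "\<And>f g x. smooth f \<Longrightarrow> smooth g \<Longrightarrow> vanishes_to_order m g x \<Longrightarrow> B f g x = 0"
proof -
  obtain T c where "finite T" "\<And>p. p \<in> T \<Longrightarrow> smooth (c p)"
    and B: "\<And>f g. smooth f \<Longrightarrow> smooth g \<Longrightarrow>
      B f g = (\<lambda>x. \<Sum>p\<in>T. c p x * pdl (fst p) f x * pdl (snd p) g x)"
    using bidiff_opE[OF assms] by blast
  define m where "m = Suc (Max ((\<lambda>p. length (fst p) + length (snd p)) ` T))"
  have "length (fst p) < m \<and> length (snd p) < m" if "p \<in> T" for p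
    using Max_ge[OF finite_imageI[OF \<open>finite T\<close>], of _ "\<lambda>p. length (fst p) + length (snd p)"]
      that unfolding m_def by fastforce
  then show thesis
    by (intro that[of m]) (simp_all add: B vanishes_to_order_def)
qed


section \<open>Monomials and linear extension to polynomials\<close>

definition xpow :: "'n::finite multiset \<Rightarrow> 'n fn" where
  "xpow M = (\<lambda>x. \<Prod>i\<in>#M. x $ i)"

lemma xpow_empty [simp]: "xpow {#} = (\<lambda>x. 1)"
  and xpow_add_mset [simp]: "xpow (add_mset i M) = (\<lambda>x. x $ i * xpow M x)"
  and xpow_union: "xpow (M + N) = (\<lambda>x. xpow M x * xpow N x)"
  by (simp_all add: xpow_def)

lemma smooth_xpow: "smooth (xpow M)"
  by (induction M) (auto simp: smooth_const intro!: smooth_mult smooth_coord)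

definition lin_ext :: "('n::finite multiset \<Rightarrow> 'n fn) \<Rightarrow> 'n pol \<Rightarrow> 'n fn" where
  "lin_ext F p = (\<lambda>x. \<Sum>M\<in>Poly_Mapping.keys p. Poly_Mapping.lookup p M * F M x)"

lemma lin_ext_superset:
  assumes "finite K" and "Poly_Mapping.keys p \<subseteq> K"
  shows "lin_ext F p x = (\<Sum>M\<in>K. Poly_Mapping.lookup p M * F M x)"
  unfolding lin_ext_def
  by (rule sum.mono_neutral_left) (use assms in \<open>auto simp: in_keys_iff\<close>)

lemma lin_ext_add: "lin_ext F (p + q) x = lin_ext F p x + lin_ext F q x"
proof -
  let ?K = "Poly_Mapping.keys p \<union> Poly_Mapping.keys q"
  have "finite ?K" "Poly_Mapping.keys (p + q) \<subseteq> ?K"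
    using keys_add[of p q] by auto
  then show ?thesis
    by (simp add: lin_ext_superset[of ?K] lookup_add algebra_simps sum.distrib)
qed

lemma lin_ext_single: "lin_ext F (Poly_Mapping.single M c) x = c * F M x"
  by (simp add: lin_ext_def)

lemma poly_eval_eq_lin_ext: "poly_eval = lin_ext xpow"
  by (simp add: fun_eq_iff poly_eval_def lin_ext_def xpow_def)

lemma rho_eq_lin_ext: "rho C r = lin_ext (rho_mon C r)"
  by (simp add: fun_eq_iff rho_def lin_ext_def)

lemma smooth_poly_eval: "smooth (poly_eval p)"
  unfolding poly_eval_eq_lin_ext lin_ext_def by (auto intro!: smooth_sum smooth_cmult smooth_xpow)

lemma poly_mapping_add_single_induct:
  assumes "P 0" and "\<And>p a b. P p \<Longrightarrow> P (p + Poly_Mapping.single a b)"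
  shows "P p"
proof (induction p rule: update_induct)
  case (update f a b)
  then have "Poly_Mapping.update a b f = f + Poly_Mapping.single a b"
    by (intro poly_mapping_eqI)
      (auto simp: lookup_update lookup_add lookup_single in_keys_iff when_def)
  then show ?case using assms(2) update by simp
qed (use assms(1) in simp)

lemma biadditive_eq_0:
  fixes D :: "('a \<Rightarrow>\<^sub>0 'b::comm_monoid_add) \<Rightarrow> ('a \<Rightarrow>\<^sub>0 'b) \<Rightarrow> 'c::cancel_comm_monoid_add"
  assumes add_left: "\<And>p s q. D (p + s) q = D p q + D s q"
    and add_right: "\<And>p q s. D p (q + s) = D p q + D p s"
    and single: "\<And>a b c d. D (Poly_Mapping.single a b) (Poly_Mapping.single c d) = 0"
  shows "D p q = 0"
proof -
  have zero_left: "D 0 q = 0" for q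
    using add_left[of 0 0 q] by simp
  have zero_right: "D p 0 = 0" for p
    using add_right[of p 0 0] by simp
  have "D (Poly_Mapping.single a b) q = 0" for a b
    by (induction q rule: poly_mapping_add_single_induct) (simp_all add: zero_right add_right single)
  then show ?thesis
    by (induction p rule: poly_mapping_add_single_induct) (simp_all add: zero_left add_left)
qed


lemma lin_ext_coboundary:
  fixes F :: "'n::finite multiset \<Rightarrow> 'n fn" and B :: "'n fn \<Rightarrow> 'n fn \<Rightarrow> 'n fn"
  assumes F_union: "\<And>M N x. F (M + N) x = F M x * xpow N x + xpow M x * F N x + B (xpow M) (xpow N) x"
    and B_left: "\<And>f g h a b x. smooth f \<Longrightarrow> smooth g \<Longrightarrow> smooth h \<Longrightarrow>
      B (\<lambda>y. a * f y + b * g y) h x = a * B f h x + b * B g h x"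
    and B_right: "\<And>f g h a b x. smooth f \<Longrightarrow> smooth g \<Longrightarrow> smooth h \<Longrightarrow>
      B h (\<lambda>y. a * f y + b * g y) x = a * B h f x + b * B h g x"
  shows "poly_eval p x * lin_ext F q x - lin_ext F (p * q) x + lin_ext F p x * poly_eval q x
    = - B (poly_eval p) (poly_eval q) x"
proof -
  define D where "D p q = poly_eval p x * lin_ext F q x - lin_ext F (p * q) x
    + lin_ext F p x * poly_eval q x + B (poly_eval p) (poly_eval q) x" for p q
  have poly_eval_add: "poly_eval (p + q) = (\<lambda>x. 1 * poly_eval p x + 1 * poly_eval q x)" for p q
    by (simp add: poly_eval_eq_lin_ext lin_ext_add fun_eq_iff)
  have poly_eval_single: "poly_eval (Poly_Mapping.single M c) = (\<lambda>x. c * xpow M x)" for M c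
    by (simp add: poly_eval_eq_lin_ext lin_ext_single fun_eq_iff)
  have B_scale: "B (\<lambda>y. a * xpow M y) (\<lambda>y. b * xpow N y) x = a * b * B (xpow M) (xpow N) x"
    for a b M N
    using B_left[of "xpow M" "xpow M" "\<lambda>y. b * xpow N y" a 0 x]
      B_right[of "xpow N" "xpow N" "xpow M" b 0 x]
    by (simp add: smooth_xpow smooth_cmult)
  have "D p q = 0"
  proof (rule biadditive_eq_0)
    show "D (p + s) q = D p q + D s q" for p s q
      unfolding D_def poly_eval_add B_left[OF smooth_poly_eval smooth_poly_eval smooth_poly_eval]
      by (simp add: distrib_right lin_ext_add algebra_simps)
    show "D p (q + s) = D p q + D p s" for p q s
      unfolding D_def poly_eval_add B_right[OF smooth_poly_eval smooth_poly_eval smooth_poly_eval]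
      by (simp add: distrib_left lin_ext_add algebra_simps)
    show "D (Poly_Mapping.single M a) (Poly_Mapping.single N b) = 0" for M a N b
      unfolding D_def poly_eval_single mult_single B_scale
      by (simp add: lin_ext_single F_union algebra_simps)
  qed
  then show ?thesis
    by (simp add: D_def)
qed


section \<open>Chains of a bilinear operator along a word\<close>

fun word_chain :: "('n::finite fn \<Rightarrow> 'n fn \<Rightarrow> 'n fn) \<Rightarrow> 'n list \<Rightarrow> 'n fn" where
  "word_chain B [] = (\<lambda>x. 0)"
| "word_chain B (i # w) = (\<lambda>x. x $ i * word_chain B w x + B (\<lambda>y. y $ i) (xpow (mset w)) x)"

lemma smooth_word_chain:
  assumes "\<And>f g. smooth f \<Longrightarrow> smooth g \<Longrightarrow> smooth (B f g)"
  shows "smooth (word_chain B w)"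
  by (induction w) (auto simp: assms smooth_const smooth_coord smooth_xpow
      intro!: smooth_add smooth_mult)

lemma starw_map_coord_0:
  assumes "\<And>f g. smooth f \<Longrightarrow> smooth g \<Longrightarrow> C 0 f g = (\<lambda>x. f x * g x)"
  shows "starw C (map coord w) 0 = xpow (mset w)"
  by (induction w) (simp_all add: assms smooth_xpow smooth_coord coord_def)

lemma starw_map_coord_1:
  assumes "\<And>f g. smooth f \<Longrightarrow> smooth g \<Longrightarrow> C 0 f g = (\<lambda>x. f x * g x)"
    and "\<And>f g. smooth f \<Longrightarrow> smooth g \<Longrightarrow> smooth (C 1 f g)"
  shows "starw C (map coord w) 1 = word_chain (C 1) w"
proof (induction w)
  case (Cons i w)
  have "{..1::nat} = {0, 1}"
    by auto
  then show ?case
    using Cons smooth_word_chain[of "C 1", OF assms(2)]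
    by (simp add: starw_map_coord_0[of C, OF assms(1), unfolded coord_def] assms smooth_coord
        coord_def)
qed simp

lemma word_chain_add:
  assumes "\<And>f g. smooth f \<Longrightarrow> smooth g \<Longrightarrow> B f g x = B1 f g x + B2 f g x"
  shows "word_chain B w x = word_chain B1 w x + word_chain B2 w x"
  by (induction w) (simp_all add: assms smooth_coord smooth_xpow algebra_simps)

text \<open>The chain of a Hochschild 2-cocycle is a cochain whose coboundary is minus that cocycle.\<close>

lemma word_chain_append:
  assumes cocycle: "\<And>f g h x. smooth f \<Longrightarrow> smooth g \<Longrightarrow> smooth h \<Longrightarrow>
      B f g x * h x + B (\<lambda>x. f x * g x) h x = f x * B g h x + B f (\<lambda>x. g x * h x) x"
    and unit: "\<And>f. smooth f \<Longrightarrow> B (\<lambda>x. 1) f = (\<lambda>x. 0)"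
  shows "word_chain B (u @ v) x = word_chain B u x * xpow (mset v) x
    + xpow (mset u) x * word_chain B v x + B (xpow (mset u)) (xpow (mset v)) x"
proof (induction u)
  case Nil
  then show ?case by (simp add: unit smooth_xpow)
next
  case (Cons i u)
  have "B (\<lambda>y. y $ i) (xpow (mset u)) x * xpow (mset v) x
        + B (\<lambda>y. y $ i * xpow (mset u) y) (xpow (mset v)) x
      = x $ i * B (xpow (mset u)) (xpow (mset v)) x
        + B (\<lambda>y. y $ i) (\<lambda>y. xpow (mset u) y * xpow (mset v) y) x"
    by (rule cocycle) (simp_all add: smooth_coord smooth_xpow)
  then show ?case
    using Cons by (simp add: xpow_union algebra_simps)
qed

lemma word_chain_perm:
  assumes cocycle: "\<And>f g h x. smooth f \<Longrightarrow> smooth g \<Longrightarrow> smooth h \<Longrightarrow>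
      B f g x * h x + B (\<lambda>x. f x * g x) h x = f x * B g h x + B f (\<lambda>x. g x * h x) x"
    and unit: "\<And>f. smooth f \<Longrightarrow> B (\<lambda>x. 1) f = (\<lambda>x. 0)"
    and sym: "\<And>f g. B f g = B g f"
  shows "mset u = mset v \<Longrightarrow> word_chain B u = word_chain B v"
proof (induction u arbitrary: v)
  case (Cons i u)
  then obtain v1 v2 where v: "v = v1 @ i # v2"
    by (metis list.set_intros(1) set_mset_mset split_list)
  have "word_chain B (v1 @ (i # v2)) x = word_chain B ((i # v2) @ v1) x" for x
    by (simp only: word_chain_append[OF cocycle unit] sym[of "xpow (mset v1)"])
      (simp add: algebra_simps)
  moreover have "mset u = mset (v2 @ v1)"
    using Cons.prems v by simp
  ultimately show ?case
    using Cons.IH v by (simp add: fun_eq_iff)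
qed simp

lemma word_chain_rev:
  assumes antisym: "\<And>f g x. smooth f \<Longrightarrow> smooth g \<Longrightarrow> B f g x = - B g f x"
    and leibniz: "\<And>f g h x. smooth f \<Longrightarrow> smooth g \<Longrightarrow> smooth h \<Longrightarrow>
      B f (\<lambda>x. g x * h x) x = B f g x * h x + g x * B f h x"
  shows "word_chain B (rev w) x = - word_chain B w x"
proof -
  have antisym_coord_xpow: "B (\<lambda>y. y $ i) (xpow M) x = - B (xpow M) (\<lambda>y. y $ i) x" for i M
    by (rule antisym) (simp_all add: smooth_coord smooth_xpow)
  have "B f (\<lambda>x. 1 * 1) x = B f (\<lambda>x. 1) x * 1 + 1 * B f (\<lambda>x. 1) x" if "smooth f" for f
    using leibniz that smooth_const by blast
  then have unit: "B f (\<lambda>x. 1) x = 0" if "smooth f" for f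
    using that by simp
  have snoc: "word_chain B (u @ [j]) x = word_chain B u x * x $ j + B (xpow (mset u)) (\<lambda>y. y $ j) x"
    for u j
  proof (induction u)
    case Nil
    then show ?case
      using unit[of "\<lambda>y. y $ j"] antisym_coord_xpow[of j "{#}"] by (simp add: smooth_coord)
  next
    case (Cons i u)
    have "B (\<lambda>y. y $ i) (xpow (mset (u @ [j]))) x
        = B (\<lambda>y. y $ i) (xpow (mset u)) x * x $ j + xpow (mset u) x * B (\<lambda>y. y $ i) (\<lambda>y. y $ j) x"
      using leibniz[of "\<lambda>y. y $ i" "xpow (mset u)" "\<lambda>y. y $ j" x]
      by (simp add: smooth_coord smooth_xpow mult.commute)
    moreover have "B (\<lambda>y. y $ i * xpow (mset u) y) (\<lambda>y. y $ j) x
        = - B (\<lambda>y. y $ j) (\<lambda>y. y $ i * xpow (mset u) y) x"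
      by (rule antisym) (simp_all add: smooth_coord smooth_xpow smooth_mult)
    moreover have "B (\<lambda>y. y $ j) (\<lambda>y. y $ i * xpow (mset u) y) x
        = B (\<lambda>y. y $ j) (\<lambda>y. y $ i) x * xpow (mset u) x + x $ i * B (\<lambda>y. y $ j) (xpow (mset u)) x"
      by (rule leibniz) (simp_all add: smooth_coord smooth_xpow)
    moreover have "B (\<lambda>y. y $ j) (\<lambda>y. y $ i) x = - B (\<lambda>y. y $ i) (\<lambda>y. y $ j) x"
      by (rule antisym) (simp_all add: smooth_coord)
    moreover have "B (\<lambda>y. y $ j) (xpow (mset u)) x = - B (xpow (mset u)) (\<lambda>y. y $ j) x"
      by (rule antisym) (simp_all add: smooth_coord smooth_xpow)
    ultimately show ?case
      using Cons by (simp add: algebra_simps)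
  qed
  show ?thesis
    by (induction w) (simp_all add: snoc antisym_coord_xpow)
qed


section \<open>Truncated Taylor operators\<close>

text \<open>Summing over words \<open>is\<close> instead of multi-indices \<open>\<alpha>\<close>: each \<open>\<alpha>\<close> is the
  multiset of \<open>|\<alpha>|!/\<alpha>!\<close> words, so the weight \<open>1/|is|!\<close> yields the Taylor weight
  \<open>1/\<alpha>!\<close>.\<close>

definition taylor_op :: "nat \<Rightarrow> ('n::finite multiset \<Rightarrow> real) \<Rightarrow> 'n fn \<Rightarrow> real ^ 'n \<Rightarrow> real"
  where "taylor_op K c f x =
    (\<Sum>is\<in>{is. length is \<le> K}. c (mset is) / fact (length is) * pdl is f x)"

lemma finite_lists_length_le_UNIV: "finite {is :: 'a::finite list. length is \<le> K}"
  using finite_lists_length_le[of "UNIV :: 'a set" K] by simp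

lemma taylor_op_const:
  fixes c :: "'n::finite multiset \<Rightarrow> real"
  shows "taylor_op K c (\<lambda>y. a) x = c {#} * a"
proof -
  have "taylor_op K c (\<lambda>y. a) x = (\<Sum>is\<in>{is :: 'n list. length is \<le> K}. if is = [] then c {#} * a else 0)"
    unfolding taylor_op_def pdl_const by (intro sum.cong refl) simp
  then show ?thesis
    by (simp add: sum.delta[OF finite_lists_length_le_UNIV])
qed

lemma taylor_op_sum:
  assumes "finite I" and "\<And>i. smooth (f i)"
  shows "taylor_op K c (\<lambda>y. \<Sum>i\<in>I. a i * f i y) x = (\<Sum>i\<in>I. a i * taylor_op K c (f i) x)"
  unfolding taylor_op_def using assms
  by (simp add: pdl_sum smooth_cmult pdl_cmult sum_distrib_left algebra_simps sum.swap[of _ I])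

lemma taylor_op_Suc_eq:
  assumes "\<And>B. size B = Suc K \<Longrightarrow> c B = 0"
  shows "taylor_op (Suc K) c f x = taylor_op K c f x"
  unfolding taylor_op_def
  by (rule sum.mono_neutral_right) (auto simp: finite_lists_length_le_UNIV assms)

lemma sum_positions_eq_sum_ins_at:
  fixes F :: "'a::finite list \<Rightarrow> nat \<Rightarrow> 'b::comm_monoid_add"
  shows "(\<Sum>is | length is \<le> Suc K. \<Sum>k<length is. if is ! k = b then F is k else 0)
    = (\<Sum>js | length js \<le> K. \<Sum>k\<le>length js. F (ins_at k b js) k)"
proof -
  let ?X = "Sigma {is :: 'a list. length is \<le> Suc K} (\<lambda>is. {..<length is})"
  let ?Y = "Sigma {js :: 'a list. length js \<le> K} (\<lambda>js. {..length js})"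
  have fin: "finite ?X"
    by (auto intro!: finite_SigmaI simp: finite_lists_length_le_UNIV)
  have "(\<Sum>is | length is \<le> Suc K. \<Sum>k<length is. if is ! k = b then F is k else 0)
      = (\<Sum>p\<in>?X. if fst p ! snd p = b then F (fst p) (snd p) else 0)"
    by (simp add: sum.Sigma finite_lists_length_le_UNIV split_def)
  also have "\<dots> = (\<Sum>p\<in>{p \<in> ?X. fst p ! snd p = b}. F (fst p) (snd p))"
    by (rule sum.inter_filter[OF fin, symmetric])
  also have "\<dots> = (\<Sum>p\<in>?Y. F (ins_at (snd p) b (fst p)) (snd p))"
    by (rule sum.reindex_bij_witness[where i = "\<lambda>p. (ins_at (snd p) b (fst p), snd p)"
          and j = "\<lambda>p. (del_at (snd p) (fst p), snd p)"])
      (auto simp: ins_at_del_at del_at_ins_at length_del_at length_ins_at nth_ins_at)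
  also have "\<dots> = (\<Sum>js | length js \<le> K. \<Sum>k\<le>length js. F (ins_at k b js) k)"
    by (simp add: sum.Sigma finite_lists_length_le_UNIV split_def)
  finally show ?thesis .
qed

lemma taylor_op_coord_mult:
  assumes "smooth h"
  shows "taylor_op (Suc K) c (\<lambda>y. y $ b * h y) x
    = x $ b * taylor_op (Suc K) c h x + taylor_op K (\<lambda>B. c (add_mset b B)) h x"
proof -
  let ?t = "\<lambda>is. c (mset is) / fact (length is)"
  have "taylor_op (Suc K) c (\<lambda>y. y $ b * h y) x = x $ b * taylor_op (Suc K) c h x
      + (\<Sum>is | length is \<le> Suc K. \<Sum>k<length is.
          ?t is * (if is ! k = b then pdl (del_at k is) h x else 0))"
    using pdl_affine_mult[OF assms, of _ b 0]
    by (simp add: taylor_op_def algebra_simps sum.distrib sum_distrib_left)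
  also have "(\<Sum>is | length is \<le> Suc K. \<Sum>k<length is.
          ?t is * (if is ! k = b then pdl (del_at k is) h x else 0))
      = (\<Sum>is | length is \<le> Suc K. \<Sum>k<length is.
          if is ! k = b then ?t is * pdl (del_at k is) h x else 0)"
    by (intro sum.cong refl) simp
  also have "\<dots> = (\<Sum>js | length js \<le> K. \<Sum>k\<le>length js.
          c (add_mset b (mset js)) / fact (Suc (length js)) * pdl js h x)"
    by (simp add: sum_positions_eq_sum_ins_at mset_ins_at length_ins_at del_at_ins_at)
  also have "\<dots> = taylor_op K (\<lambda>B. c (add_mset b B)) h x"
    unfolding taylor_op_def by (intro sum.cong refl) (simp add: fact_Suc)
  finally show ?thesis .
qed


section \<open>Maps on monomials with a local recursion are differential operators\<close>

definition centered_monomial :: "real ^ 'n \<Rightarrow> 'n::finite multiset \<Rightarrow> 'n multiset \<Rightarrow> 'n fn"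
  where "centered_monomial x A M = (\<lambda>y. (\<Prod>a\<in>#A. y $ a - x $ a) * xpow M y)"

lemma centered_monomial_empty: "centered_monomial x {#} M = xpow M"
  and centered_monomial_add_mset:
    "centered_monomial x (add_mset a A) M = (\<lambda>y. (y $ a - x $ a) * centered_monomial x A M y)"
  and centered_monomial_add_mset_right:
    "centered_monomial x A (add_mset a M) = (\<lambda>y. y $ a * centered_monomial x A M y)"
  by (simp_all add: centered_monomial_def algebra_simps)

lemma smooth_centered_monomial: "smooth (centered_monomial x A M)"
  by (induction A)
    (auto simp: centered_monomial_empty centered_monomial_add_mset smooth_xpow
      intro!: smooth_mult smooth_affine)

lemma vanishes_to_order_centered_monomial:
  "vanishes_to_order (size A) (centered_monomial x A M) x"
proof (induction A)
  case (add a A)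
  show ?case
    unfolding vanishes_to_order_def
  proof (intro allI impI)
    fix js :: "'a list"
    assume "length js < size (add_mset a A)"
    then have "pdl (del_at k js) (centered_monomial x A M) x = 0" if "k < length js" for k
      using add that by (simp add: vanishes_to_order_def length_del_at)
    then show "pdl js (centered_monomial x (add_mset a A) M) x = 0"
      by (auto simp: centered_monomial_add_mset pdl_affine_mult[OF smooth_centered_monomial]
          intro!: sum.neutral)
  qed
qed (simp add: vanishes_to_order_def)

text \<open>On functions \<open>\<Phi>\<close> of monomials, \<open>shift_mult x a\<close> is multiplication by \<open>y\<^sub>a - x\<^sub>a\<close>.\<close>

definition shift_mult ::
    "real ^ 'n \<Rightarrow> 'n::finite \<Rightarrow> ('n multiset \<Rightarrow> real) \<Rightarrow> 'n multiset \<Rightarrow> real"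
  where "shift_mult x a \<Phi> = (\<lambda>M. \<Phi> (add_mset a M) - x $ a * \<Phi> M)"

lemma comp_fun_commute_shift_mult: "comp_fun_commute (shift_mult x)"
  unfolding comp_fun_commute_def
  by (auto simp: shift_mult_def fun_eq_iff algebra_simps add_mset_commute)

lemma fold_shift_mult_add_mset:
  "fold_mset (shift_mult x) \<Phi> (add_mset a A) M
    = fold_mset (shift_mult x) \<Phi> A (add_mset a M) - x $ a * fold_mset (shift_mult x) \<Phi> A M"
  by (simp only: comp_fun_commute.fold_mset_add_mset[OF comp_fun_commute_shift_mult])
    (simp add: shift_mult_def)

lemma fold_shift_mult_linear:
  assumes linear: "\<And>f g a b. smooth f \<Longrightarrow> smooth g \<Longrightarrow>
      L (\<lambda>y. a * f y + b * g y) = a * L f + b * L g"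
  shows "fold_mset (shift_mult x) (\<lambda>M. L (xpow M)) A M = L (centered_monomial x A M)"
proof (induction A arbitrary: M)
  case (add a A)
  have "centered_monomial x (add_mset a A) M
      = (\<lambda>y. 1 * centered_monomial x A (add_mset a M) y + (- x $ a) * centered_monomial x A M y)"
    by (simp add: centered_monomial_add_mset centered_monomial_add_mset_right algebra_simps)
  then have "L (centered_monomial x (add_mset a A) M)
      = 1 * L (centered_monomial x A (add_mset a M)) + (- x $ a) * L (centered_monomial x A M)"
    by (simp only: linear smooth_centered_monomial)
  then show ?case
    using add by (simp add: fold_shift_mult_add_mset)
qed (simp add: centered_monomial_empty)

locale local_monomial_recursion =
  fixes F :: "'n::finite multiset \<Rightarrow> 'n fn" and E :: "'n \<Rightarrow> 'n fn \<Rightarrow> 'n fn" and m :: nat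
  assumes smooth_F: "smooth (F M)"
    and F_add_mset: "F (add_mset b M) x = x $ b * F M x + E b (xpow M) x"
    and E_linear: "smooth f \<Longrightarrow> smooth g \<Longrightarrow>
      E b (\<lambda>y. a * f y + c * g y) x = a * E b f x + c * E b g x"
    and E_local: "smooth f \<Longrightarrow> vanishes_to_order m f x \<Longrightarrow> E b f x = 0"
begin

text \<open>\<open>centered x A M\<close> is the value at \<open>x\<close> of the linear extension of \<open>F\<close> applied to
  \<open>centered_monomial x A M\<close>.\<close>

definition centered :: "real ^ 'n \<Rightarrow> 'n multiset \<Rightarrow> 'n multiset \<Rightarrow> real" where
  "centered x A = fold_mset (shift_mult x) (\<lambda>M. F M x) A"

lemma centered_empty: "centered x {#} M = F M x"
  by (simp add: centered_def)

lemma centered_add_mset: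
  "centered x (add_mset b A) M = centered x A (add_mset b M) - x $ b * centered x A M"
  by (simp add: centered_def fold_shift_mult_add_mset)

lemma smooth_centered: "smooth (\<lambda>x. centered x A M)"
proof (induction A arbitrary: M)
  case (add b A)
  then show ?case
    by (simp add: centered_add_mset) (intro smooth_minus smooth_mult smooth_coord add)
qed (simp add: centered_empty smooth_F)

lemma centered_add_mset_eq_E: "centered x (add_mset b A) M = E b (centered_monomial x A M) x"
proof -
  have "centered x (add_mset b A) M = fold_mset (shift_mult x) (shift_mult x b (\<lambda>M. F M x)) A M"
    unfolding centered_def
    by (simp only: comp_fun_commute.fold_mset_add_mset[OF comp_fun_commute_shift_mult]
        comp_fun_commute.fold_mset_fun_left_comm[OF comp_fun_commute_shift_mult])
  also have "shift_mult x b (\<lambda>M. F M x) = (\<lambda>M. E b (xpow M) x)"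
    by (simp add: shift_mult_def F_add_mset fun_eq_iff)
  also have "fold_mset (shift_mult x) (\<lambda>M. E b (xpow M) x) A M = E b (centered_monomial x A M) x"
    by (rule fold_shift_mult_linear) (rule E_linear)
  finally show ?thesis .
qed

lemma centered_eq_0: "m < size A \<Longrightarrow> centered x A M = 0"
proof (cases A)
  case (add b A')
  moreover assume "m < size A"
  ultimately have "vanishes_to_order m (centered_monomial x A' M) x"
    using vanishes_to_order_centered_monomial[of A' x M] by (simp add: vanishes_to_order_def)
  then show ?thesis
    by (simp add: add centered_add_mset_eq_E E_local smooth_centered_monomial)
qed simp

text \<open>Taylor expansion of the monomial \<open>xpow M\<close> around \<open>x\<close>, pushed through \<open>F\<close>.\<close>

lemma taylor_op_centered:
  "taylor_op (Suc m) (\<lambda>B. centered x (A + B) {#}) (xpow M) x = centered x A M"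
proof (induction M arbitrary: A)
  case empty
  then show ?case by (simp add: taylor_op_const)
next
  case (add b M)
  have "taylor_op m (\<lambda>B. centered x (add_mset b A + B) {#}) (xpow M) x
      = taylor_op (Suc m) (\<lambda>B. centered x (add_mset b A + B) {#}) (xpow M) x"
    by (rule taylor_op_Suc_eq[symmetric]) (simp add: centered_eq_0)
  then show ?case
    using add.IH[of A] add.IH[of "add_mset b A"]
    by (simp add: taylor_op_coord_mult smooth_xpow centered_add_mset)
qed

theorem diff_op_extension:
  "\<exists>D. diff_op D \<and> (\<forall>c. D (\<lambda>_. c) = (\<lambda>x. F {#} x * c)) \<and> (\<forall>p. D (poly_eval p) = lin_ext F p)"
proof (intro exI conjI allI)
  define D where "D f = (\<lambda>x. taylor_op (Suc m) (\<lambda>B. centered x B {#}) f x)" for f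
  show "diff_op D"
    unfolding diff_op_def
  proof (intro exI conjI ballI allI impI)
    show "finite {is :: 'n list. length is \<le> Suc m}"
      by (rule finite_lists_length_le_UNIV)
    show "smooth (\<lambda>x. centered x (mset is) {#} / fact (length is))" for "is" :: "'n list"
      using smooth_cmult[OF smooth_centered, of "1 / fact (length is)"] by simp
    show "D f = (\<lambda>x. \<Sum>is\<in>{is. length is \<le> Suc m}.
        centered x (mset is) {#} / fact (length is) * pdl is f x)" for f
      by (simp add: D_def taylor_op_def)
  qed
  show "D (\<lambda>_. c) = (\<lambda>x. F {#} x * c)" for c
    by (simp add: D_def taylor_op_const centered_empty)
  show "D (poly_eval p) = lin_ext F p" for p
    using taylor_op_centered[of _ "{#}"]
    by (simp add: fun_eq_iff D_def poly_eval_eq_lin_ext lin_ext_def taylor_op_sum smooth_xpow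
        centered_empty)
qed

end


section \<open>The first sun-product cochain\<close>

locale poisson_star_product =
  fixes P :: "'n::finite fn \<Rightarrow> 'n fn \<Rightarrow> 'n fn" and C :: "nat \<Rightarrow> 'n fn \<Rightarrow> 'n fn \<Rightarrow> 'n fn"
  assumes poisson: "poisson_bracket P" and star: "star_product P C"
begin

lemma bidiff_op_C: "bidiff_op (C r)"
  using star unfolding star_product_def by blast

lemma C0_eq: "smooth f \<Longrightarrow> smooth g \<Longrightarrow> C 0 f g = (\<lambda>x. f x * g x)"
  using star unfolding star_product_def by blast

lemma C1_const_left: "smooth f \<Longrightarrow> C 1 (\<lambda>_. c) f = (\<lambda>_. 0)"
  and C1_const_right: "smooth f \<Longrightarrow> C 1 f (\<lambda>_. c) = (\<lambda>_. 0)"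
  using star unfolding star_product_def by (meson order_refl)+

lemma smooth_C: "smooth f \<Longrightarrow> smooth g \<Longrightarrow> smooth (C r f g)"
  by (rule bidiff_op_smooth[OF bidiff_op_C])

text \<open>The \<open>\<nu>\<^sup>1\<close>-part of associativity: \<open>C\<^sub>1\<close> is a Hochschild 2-cocycle.\<close>

lemma C1_cocycle:
  assumes "smooth f" and "smooth g" and "smooth h"
  shows "C 1 f g x * h x + C 1 (\<lambda>x. f x * g x) h x = f x * C 1 g h x + C 1 f (\<lambda>x. g x * h x) x"
proof -
  have "(\<lambda>x. \<Sum>s\<le>1. C s (C (1 - s) f g) h x) = (\<lambda>x. \<Sum>s\<le>1. C s f (C (1 - s) g h) x)"
    using star assms unfolding star_product_def by blast
  then have "(\<Sum>s\<le>1. C s (C (1 - s) f g) h x) = (\<Sum>s\<le>1. C s f (C (1 - s) g h) x)"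
    by (rule fun_cong)
  moreover have "{..1::nat} = {0, 1}"
    by auto
  ultimately show ?thesis
    using assms by (simp add: C0_eq smooth_C algebra_simps)
qed

lemma P_eq_C1_skew:
  assumes "smooth f" and "smooth g"
  shows "P f g x = (C 1 f g x - C 1 g f x) / 2"
proof -
  have "(\<lambda>x. C 1 f g x - C 1 g f x) = (\<lambda>x. 2 * P f g x)"
    using star assms unfolding star_product_def by blast
  from fun_cong[OF this, of x] show ?thesis
    by simp
qed

lemma P_antisym: "smooth f \<Longrightarrow> smooth g \<Longrightarrow> P f g x = - P g f x"
  by (simp add: P_eq_C1_skew minus_divide_left)

lemma P_leibniz:
  assumes "smooth f" and "smooth g" and "smooth h"
  shows "P f (\<lambda>x. g x * h x) x = P f g x * h x + g x * P f h x"
proof -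
  have "P f (\<lambda>x. g x * h x) = (\<lambda>x. P f g x * h x + g x * P f h x)"
    using poisson assms unfolding poisson_bracket_def by blast
  from fun_cong[OF this, of x] show ?thesis .
qed

definition C1_sym :: "'n fn \<Rightarrow> 'n fn \<Rightarrow> 'n fn" where
  "C1_sym f g = (\<lambda>x. (C 1 f g x + C 1 g f x) / 2)"

lemma C1_sym_commute: "C1_sym f g = C1_sym g f"
  by (simp add: C1_sym_def add.commute)

lemma C1_eq_sym_plus_P: "smooth f \<Longrightarrow> smooth g \<Longrightarrow> C 1 f g x = C1_sym f g x + P f g x"
  by (simp add: C1_sym_def P_eq_C1_skew field_simps)

lemma smooth_C1_sym: "smooth f \<Longrightarrow> smooth g \<Longrightarrow> smooth (C1_sym f g)"
  unfolding C1_sym_def using smooth_cmult[OF smooth_add[OF smooth_C smooth_C], of f g g f "1/2"]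
  by simp

lemma C1_sym_unit: "smooth f \<Longrightarrow> C1_sym (\<lambda>x. 1) f = (\<lambda>x. 0)"
  by (simp add: C1_sym_def smooth_const C1_const_left C1_const_right)

lemma C1_sym_cocycle:
  assumes "smooth f" and "smooth g" and "smooth h"
  shows "C1_sym f g x * h x + C1_sym (\<lambda>x. f x * g x) h x
    = f x * C1_sym g h x + C1_sym f (\<lambda>x. g x * h x) x"
proof -
  have "(\<lambda>x. h x * g x) = (\<lambda>x. g x * h x)" "(\<lambda>x. g x * f x) = (\<lambda>x. f x * g x)"
    by (simp_all add: mult.commute)
  then show ?thesis
    using C1_cocycle[OF assms, of x] C1_cocycle[OF assms(3,2,1), of x]
    by (simp add: C1_sym_def field_simps)
qed

lemma C1_sym_linear_left:
  "smooth f \<Longrightarrow> smooth g \<Longrightarrow> smooth h \<Longrightarrow>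
    C1_sym (\<lambda>y. a * f y + b * g y) h x = a * C1_sym f h x + b * C1_sym g h x"
  by (simp add: C1_sym_def bidiff_op_linear[OF bidiff_op_C] field_simps)

lemma C1_sym_linear_right:
  "smooth f \<Longrightarrow> smooth g \<Longrightarrow> smooth h \<Longrightarrow>
    C1_sym h (\<lambda>y. a * f y + b * g y) x = a * C1_sym h f x + b * C1_sym h g x"
  using C1_sym_linear_left by (simp add: C1_sym_commute)

text \<open>Reversing a word negates the chain of \<open>P\<close>, so symmetrisation kills the
  skew part of \<open>C\<^sub>1\<close>.\<close>

lemma rho_mon_1_eq_word_chain: "mset w = M \<Longrightarrow> rho_mon C 1 M = word_chain C1_sym w"
proof -
  assume w: "mset w = M"
  let ?Q = "permutations_of_multiset M"
  have "(\<Sum>v\<in>?Q. word_chain P v x) = (\<Sum>v\<in>?Q. word_chain P (rev v) x)" for x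
    by (rule sum.reindex_bij_witness[where i = rev and j = rev])
      (auto intro!: permutations_of_multisetI dest!: permutations_of_multisetD)
  then have skew: "(\<Sum>v\<in>?Q. word_chain P v x) = 0" for x
    by (simp add: word_chain_rev[of P, OF P_antisym P_leibniz] sum_negf)
  have "word_chain C1_sym v = word_chain C1_sym w" if "v \<in> ?Q" for v
    using that w permutations_of_multisetD
    by (intro word_chain_perm[of C1_sym, OF C1_sym_cocycle C1_sym_unit C1_sym_commute]) auto
  then have sym: "(\<Sum>v\<in>?Q. word_chain C1_sym v x) = real (card ?Q) * word_chain C1_sym w x" for x
    by simp
  have "card ?Q \<noteq> 0"
    by (simp add: card_eq_0_iff)
  then show ?thesis
    using word_chain_add[of "C 1" _ C1_sym P, OF C1_eq_sym_plus_P]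
    by (simp add: rho_mon_def starw_map_coord_1[of C, OF C0_eq smooth_C] fun_eq_iff sum.distrib
        skew sym)
qed

lemma smooth_rho_mon_1: "smooth (rho_mon C 1 M)"
  by (metis ex_mset rho_mon_1_eq_word_chain smooth_word_chain smooth_C1_sym)

lemma rho_mon_1_union:
  "rho_mon C 1 (M + N) x
    = rho_mon C 1 M x * xpow N x + xpow M x * rho_mon C 1 N x + C1_sym (xpow M) (xpow N) x"
proof -
  obtain u v where u: "mset u = M" and v: "mset v = N"
    by (meson ex_mset)
  then have "rho_mon C 1 (M + N) x = word_chain C1_sym (u @ v) x"
    by (intro fun_cong[OF rho_mon_1_eq_word_chain]) simp
  also have "\<dots> = word_chain C1_sym u x * xpow (mset v) x + xpow (mset u) x * word_chain C1_sym v x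
      + C1_sym (xpow (mset u)) (xpow (mset v)) x"
    by (rule word_chain_append[of C1_sym, OF C1_sym_cocycle C1_sym_unit])
  finally show ?thesis
    unfolding rho_mon_1_eq_word_chain[OF u] rho_mon_1_eq_word_chain[OF v] u v .
qed

lemma rho_1_coboundary:
  "poly_eval p x * rho C 1 q x - rho C 1 (p * q) x + rho C 1 p x * poly_eval q x
    = P (poly_eval p) (poly_eval q) x - C 1 (poly_eval p) (poly_eval q) x"
proof -
  have "poly_eval p x * rho C 1 q x - rho C 1 (p * q) x + rho C 1 p x * poly_eval q x
      = - C1_sym (poly_eval p) (poly_eval q) x"
    unfolding rho_eq_lin_ext
    by (rule lin_ext_coboundary[of "rho_mon C 1" C1_sym])
      (fact rho_mon_1_union C1_sym_linear_left C1_sym_linear_right)+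
  then show ?thesis
    using C1_eq_sym_plus_P[OF smooth_poly_eval smooth_poly_eval, of p q x] by simp
qed

lemma rho_1_diff_op:
  "\<exists>D. diff_op D \<and> (\<forall>c. D (\<lambda>_. c) = (\<lambda>_. 0)) \<and> (\<forall>p. rho C 1 p = D (poly_eval p))"
proof -
  obtain m where
    local_left: "\<And>f g x. smooth f \<Longrightarrow> smooth g \<Longrightarrow> vanishes_to_order m f x \<Longrightarrow> C 1 f g x = 0"
    and local_right: "\<And>f g x. smooth f \<Longrightarrow> smooth g \<Longrightarrow> vanishes_to_order m g x \<Longrightarrow> C 1 f g x = 0"
    using bidiff_op_local[OF bidiff_op_C] by blast
  interpret local_monomial_recursion "rho_mon C 1" "\<lambda>b. C1_sym (\<lambda>y. y $ b)" m
  proof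
    show "rho_mon C 1 (add_mset b M) x = x $ b * rho_mon C 1 M x + C1_sym (\<lambda>y. y $ b) (xpow M) x"
      for b M x
    proof -
      obtain w where w: "mset w = M"
        by (meson ex_mset)
      then have "rho_mon C 1 (add_mset b M) = word_chain C1_sym (b # w)"
        by (intro rho_mon_1_eq_word_chain) simp
      then show ?thesis
        using rho_mon_1_eq_word_chain[OF w] w by simp
    qed
    show "C1_sym (\<lambda>y. y $ b) f x = 0" if "smooth f" "vanishes_to_order m f x" for b f x
      using local_left[OF that(1) smooth_coord that(2)] local_right[OF smooth_coord that]
      by (simp add: C1_sym_def)
  qed (simp_all add: smooth_rho_mon_1 C1_sym_linear_right smooth_coord)
  obtain D where "diff_op D" and "\<And>c. D (\<lambda>_. c) = (\<lambda>x. rho_mon C 1 {#} x * c)"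
    and "\<And>p. D (poly_eval p) = lin_ext (rho_mon C 1) p"
    using diff_op_extension by blast
  moreover have "rho_mon C 1 {#} = (\<lambda>x. 0)"
    using rho_mon_1_eq_word_chain[of "[]"] by simp
  ultimately show ?thesis
    by (auto simp: rho_eq_lin_ext)
qed

end

theorem lemma3:
  fixes P :: "'n::finite fn \<Rightarrow> 'n fn \<Rightarrow> 'n fn"
    and C :: "nat \<Rightarrow> 'n fn \<Rightarrow> 'n fn \<Rightarrow> 'n fn"
  assumes "poisson_bracket P"
    and "star_product P C"
  shows "(\<exists>D. diff_op D \<and> (\<forall>c. D (\<lambda>_. c) = (\<lambda>_. 0)) \<and>
              (\<forall>p. rho C 1 p = D (poly_eval p))) \<and>
         (\<forall>p q. (\<lambda>x. poly_eval p x * rho C 1 q x - rho C 1 (p * q) x + rho C 1 p x * poly_eval q x)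
              = (\<lambda>x. P (poly_eval p) (poly_eval q) x - C 1 (poly_eval p) (poly_eval q) x))"
proof -
  interpret poisson_star_product P C
    using assms by (rule poisson_star_product.intro)
  show ?thesis
    using rho_1_diff_op rho_1_coboundary by blast
qed

end
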